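(* Let $A_1,A_2,A_3$ be $m\times m$ complex positive semidefinite matrices. Then $$\det(A_1+A_2+A_3)+\det A_1+\det A_2+\det A_3\;\ge\;\det(A_1+A_2)+\det(A_1+A_3)+\det(A_2+A_3).$$ *)

theory Defs
  imports "HOL-Analysis.Analysis" "HOL-Library.Complex_Order"
begin

definition conj_transpose :: "complex ^'n ^'m \<Rightarrow> complex ^'m ^'n" where
  "conj_transpose A = (\<chi> i j. cnj (A $ j $ i))"

definition hermitian_mat :: "complex ^'n ^'n \<Rightarrow> bool" where
  "hermitian_mat A \<longleftrightarrow> conj_transpose A = A"

text \<open>Positive semidefinite: Hermitian and x^* A x is real and nonnegative for all x
  (order on complex from Complex_Order: z \<ge> 0 iff z is real and Re z \<ge> 0).\<close>
definition psd_mat :: "complex ^'n ^'n \<Rightarrow> bool" where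
  "psd_mat A \<longleftrightarrow> hermitian_mat A \<and>
     (\<forall>x :: complex ^'n. (\<Sum>i\<in>UNIV. \<Sum>j\<in>UNIV. cnj (x $ i) * A $ i $ j * x $ j) \<ge> 0)"

end

theory Submission
  imports Defs
begin

text \<open>Write each \<open>A\<^sub>j\<close> as a sum of rank-one matrices \<open>v v\<^sup>*\<close> (Cholesky elimination).
  For a family \<open>(v\<^sub>k)\<^sub>k\<^sub>\<in>\<^sub>S\<close>, multilinearity of the determinant in the rows gives
  \<open>det (\<Sum>k\<in>S. v\<^sub>k v\<^sub>k\<^sup>*) = \<Sum>U\<subseteq>S. c\<^sub>U\<close>, where \<open>c\<^sub>U\<close> collects the terms whose rows are taken
  from exactly the summands in \<open>U\<close>; as in the Cauchy--Binet formula, \<open>c\<^sub>U = |det [v\<^sub>u]\<^sub>u\<^sub>\<in>\<^sub>U|\<^sup>2 \<ge> 0\<close>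
  (and \<open>c\<^sub>U = 0\<close> unless \<open>|U| = m\<close>). Indexing the three families by disjoint sets \<open>S\<^sub>1, S\<^sub>2, S\<^sub>3\<close>,
  every determinant in the inequality is such a subset sum, and by inclusion--exclusion the
  difference of the two sides is the sum of the \<open>c\<^sub>U\<close> over the \<open>U\<close> meeting all three \<open>S\<^sub>j\<close>.\<close>

definition outer_prod :: "complex^'m \<Rightarrow> complex^'m^'m" where
  "outer_prod v = (\<chi> i j. v$i * cnj (v$j))"

definition quad_form :: "complex^'m^'m \<Rightarrow> complex^'m \<Rightarrow> complex" where
  "quad_form A x = (\<Sum>i\<in>UNIV. \<Sum>j\<in>UNIV. cnj (x$i) * A$i$j * x$j)"

lemma psd_mat_iff_quad_form: "psd_mat A \<longleftrightarrow> hermitian_mat A \<and> (\<forall>x. quad_form A x \<ge> 0)"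
  by (simp add: psd_mat_def quad_form_def)

lemma hermitian_mat_cnj_entry: "hermitian_mat A \<Longrightarrow> cnj (A$i$j) = A$j$i"
  unfolding hermitian_mat_def conj_transpose_def by (metis vec_lambda_beta)

lemma quad_form_diff: "quad_form (A - B) x = quad_form A x - quad_form B x"
  by (simp add: quad_form_def algebra_simps sum_subtractf)

lemma quad_form_add_axis:
  fixes A :: "complex^'m^'m" and x :: "complex^'m" and i :: 'm
  assumes herm: "hermitian_mat A"
  defines "s \<equiv> \<Sum>k\<in>UNIV. A$i$k * x$k"
  shows "quad_form A (x + axis i t) = quad_form A x + t * cnj s + cnj t * s + cnj t * t * A$i$i"
proof -
  have entry: "cnj ((x + axis i t) $ a) * A$a$b * (x + axis i t) $ b =
      cnj (x$a) * A$a$b * x$b + (if b = i then cnj (x$a) * A$a$i * t else 0)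
      + (if a = i then cnj t * A$i$b * x$b else 0)
      + (if b = i then if a = i then cnj t * t * A$i$i else 0 else 0)" for a b
    by (cases "a = i"; cases "b = i") (simp_all add: axis_def algebra_simps)
  have "(\<Sum>a\<in>UNIV. cnj (x$a) * A$a$i) = cnj s"
    by (simp add: s_def cnj_sum hermitian_mat_cnj_entry[OF herm] mult.commute)
  then have "(\<Sum>a\<in>UNIV. \<Sum>b\<in>UNIV. if b = i then cnj (x$a) * A$a$i * t else 0) = t * cnj s"
    by (simp add: sum_distrib_left[symmetric] mult.commute[of _ t])
  moreover have "(\<Sum>a\<in>UNIV. \<Sum>b\<in>UNIV. if a = i then cnj t * A$i$b * x$b else 0) = cnj t * s"
    by (subst sum.swap) (simp add: s_def sum_distrib_left mult.assoc)
  ultimately show ?thesis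
    unfolding quad_form_def entry sum.distrib by simp
qed

lemma psd_mat_diag_nonneg: "psd_mat A \<Longrightarrow> A$i$i \<ge> 0"
proof -
  assume psd: "psd_mat A"
  then have "quad_form A (0 + axis i 1) = A$i$i"
    unfolding psd_mat_iff_quad_form by (subst quad_form_add_axis) (auto simp: quad_form_def)
  with psd show ?thesis by (metis psd_mat_iff_quad_form)
qed

lemma psd_mat_row_zero:
  fixes A :: "complex^'m^'m"
  assumes psd: "psd_mat A" and diag: "A$i$i = 0"
  shows "A$i$k = 0"
proof (rule ccontr)
  assume "A$i$k \<noteq> 0"
  then have pos: "cmod (A$i$k)^2 > 0" by simp
  define x :: "complex^'m" where "x = axis k 1"
  define q where "q = Re (quad_form A x)"
  define r where "r = (\<bar>q\<bar> + 1) / (2 * cmod (A$i$k)^2)"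
  have herm: "hermitian_mat A" and nonneg: "\<And>y. quad_form A y \<ge> 0"
    using psd by (auto simp: psd_mat_iff_quad_form)
  define y where "y = x + axis i (- of_real r * A$i$k)"
  have "(\<Sum>l\<in>UNIV. A$i$l * x$l) = A$i$k"
    by (simp add: x_def axis_def if_distrib[of "(*) _"] cong: if_cong)
  then have "quad_form A y = quad_form A x - of_real (2 * r) * (A$i$k * cnj (A$i$k))"
    by (simp add: y_def quad_form_add_axis[OF herm] diag algebra_simps)
  also have "\<dots> = quad_form A x - of_real (2 * r * cmod (A$i$k)^2)"
    by (simp flip: complex_norm_square)
  finally have "Re (quad_form A y) = q - 2 * r * cmod (A$i$k)^2"
    by (simp add: q_def)
  moreover have "Re (quad_form A y) \<ge> 0"
    using nonneg[of y] by (simp add: less_eq_complex_def)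
  moreover have "2 * r * cmod (A$i$k)^2 = \<bar>q\<bar> + 1"
    using pos by (simp add: r_def)
  ultimately show False
    by linarith
qed

lemma psd_mat_split_outer_prod:
  fixes A :: "complex^'m^'m"
  assumes psd: "psd_mat A" and pivot: "A$i$i \<noteq> 0"
  obtains v where "psd_mat (A - outer_prod v)" and "(A - outer_prod v)$i$i = 0"
    and "\<And>j. A$j$j = 0 \<Longrightarrow> (A - outer_prod v)$j$j = 0"
proof -
  have herm: "hermitian_mat A" and nonneg: "\<And>x. quad_form A x \<ge> 0"
    using psd by (auto simp: psd_mat_iff_quad_form)
  define d where "d = Re (A$i$i)"
  have Aii: "A$i$i = of_real d" and "d > 0"
    using psd_mat_diag_nonneg[OF psd, of i] pivot
    by (auto simp: d_def less_eq_complex_def complex_eq_iff)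
  define v where "v = (\<chi> j. A$j$i / of_real (sqrt d))"
  define B where "B = A - outer_prod v"
  have B_entry: "B$j$k = A$j$k - A$j$i * A$i$k / of_real d" for j k
    using \<open>d > 0\<close> by (simp add: B_def outer_prod_def v_def hermitian_mat_cnj_entry[OF herm]
      flip: of_real_mult)
  have "hermitian_mat B"
    unfolding hermitian_mat_def conj_transpose_def
    by (simp add: vec_eq_iff B_entry hermitian_mat_cnj_entry[OF herm] mult.commute)
  moreover have "quad_form B x \<ge> 0" for x
  proof -
    define s where "s = (\<Sum>k\<in>UNIV. A$i$k * x$k)"
    have "quad_form (outer_prod v) x
        = (\<Sum>j\<in>UNIV. \<Sum>k\<in>UNIV. (cnj (x$j) * A$j$i) * (A$i$k * x$k) / of_real d)"
      using \<open>d > 0\<close>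
      by (simp add: quad_form_def outer_prod_def v_def hermitian_mat_cnj_entry[OF herm]
          algebra_simps flip: of_real_mult)
    also have "\<dots> = (\<Sum>j\<in>UNIV. cnj (x$j) * A$j$i) * s / of_real d"
      by (simp add: s_def sum_product sum_divide_distrib)
    also have "(\<Sum>j\<in>UNIV. cnj (x$j) * A$j$i) = cnj s"
      by (simp add: s_def hermitian_mat_cnj_entry[OF herm] mult.commute)
    finally have "quad_form (outer_prod v) x = cnj s * s / of_real d" .
    moreover have "quad_form A (x + axis i (- s / of_real d)) = quad_form A x - cnj s * s / of_real d"
      unfolding quad_form_add_axis[OF herm] s_def[symmetric] Aii using \<open>d > 0\<close>
      by (simp add: field_simps power2_eq_square)
    ultimately show ?thesis
      using nonneg[of "x + axis i (- s / of_real d)"] by (simp add: B_def quad_form_diff)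
  qed
  ultimately have "psd_mat B"
    by (simp add: psd_mat_iff_quad_form)
  moreover have "B$i$i = 0"
    using \<open>d > 0\<close> by (simp add: B_entry Aii power2_eq_square)
  moreover have "B$j$j = 0" if "A$j$j = 0" for j
    using psd_mat_row_zero[OF psd that, of i] that by (simp add: B_entry)
  ultimately show ?thesis
    unfolding B_def by (rule that)
qed

lemma psd_mat_sum_outer_prod:
  fixes A :: "complex^'m::finite^'m"
  assumes "psd_mat A"
  shows "\<exists>(n::nat) v. A = (\<Sum>k<n. outer_prod (v k))"
  using assms
proof (induction "card {i. A$i$i \<noteq> 0}" arbitrary: A rule: less_induct)
  case less
  show ?case
  proof (cases "\<forall>i. A$i$i = 0")
    case True
    then have "A = (\<Sum>k<(0::nat). outer_prod (v k))" for v
      using psd_mat_row_zero[OF less.prems] by (simp add: vec_eq_iff)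
    then show ?thesis by blast
  next
    case False
    then obtain i where pivot: "A$i$i \<noteq> 0" by blast
    obtain v where psd: "psd_mat (A - outer_prod v)" and pivot': "(A - outer_prod v)$i$i = 0"
      and zero: "\<And>j. A$j$j = 0 \<Longrightarrow> (A - outer_prod v)$j$j = 0"
      using psd_mat_split_outer_prod[OF less.prems pivot] by metis
    have "{j. (A - outer_prod v)$j$j \<noteq> 0} \<subset> {j. A$j$j \<noteq> 0}"
      using pivot pivot' zero by auto
    then have "card {j. (A - outer_prod v)$j$j \<noteq> 0} < card {j. A$j$j \<noteq> 0}"
      by (simp add: psubset_card_mono)
    then obtain n :: nat and w where "A - outer_prod v = (\<Sum>k<n. outer_prod (w k))"
      using less.hyps psd by blast
    then have "A = (\<Sum>k<Suc n. outer_prod ((w(n := v)) k))"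
      by (simp add: algebra_simps)
    then show ?thesis by blast
  qed
qed

lemma sum_Pow_disjoint_union3_ineq:
  fixes g :: "'a set \<Rightarrow> 'b::ordered_comm_monoid_add"
  assumes fin: "finite A" "finite B" "finite C"
    and disj: "A \<inter> B = {}" "A \<inter> C = {}" "B \<inter> C = {}"
    and nonneg: "\<And>U. g U \<ge> 0"
  defines "F \<equiv> \<lambda>S. \<Sum>U\<in>Pow S. g U"
  shows "F (A \<union> B) + F (A \<union> C) + F (B \<union> C) \<le> F (A \<union> B \<union> C) + F A + F B + F C"
proof -
  let ?X = "A \<union> B \<union> C"
  let ?I = "\<lambda>S U. if U \<subseteq> S then g U else 0"
  have F_eq: "F S = (\<Sum>U\<in>Pow ?X. ?I S U)" if "S \<subseteq> ?X" for S
  proof -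
    have "Pow S = {U \<in> Pow ?X. U \<subseteq> S}"
      using that by auto
    then show ?thesis
      unfolding F_def using fin by (simp only: sum.inter_filter finite_Pow_iff finite_UnI)
  qed
  \<comment> \<open>Right minus left counts \<open>g U\<close> once if \<open>U\<close> meets all of \<open>A, B, C\<close> or none of them,
    and zero times otherwise.\<close>
  have "?I (A \<union> B) U + ?I (A \<union> C) U + ?I (B \<union> C) U \<le> ?I ?X U + ?I A U + ?I B U + ?I C U"
    if "U \<subseteq> ?X" for U
    using that disj nonneg[of U] by (auto simp: add_increasing add_increasing2)
  then have "(\<Sum>U\<in>Pow ?X. ?I (A \<union> B) U + ?I (A \<union> C) U + ?I (B \<union> C) U)
      \<le> (\<Sum>U\<in>Pow ?X. ?I ?X U + ?I A U + ?I B U + ?I C U)"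
    by (intro sum_mono) simp
  moreover have "F (A \<union> B) = (\<Sum>U\<in>Pow ?X. ?I (A \<union> B) U)"
    "F (A \<union> C) = (\<Sum>U\<in>Pow ?X. ?I (A \<union> C) U)"
    "F (B \<union> C) = (\<Sum>U\<in>Pow ?X. ?I (B \<union> C) U)"
    "F ?X = (\<Sum>U\<in>Pow ?X. ?I ?X U)"
    "F A = (\<Sum>U\<in>Pow ?X. ?I A U)" "F B = (\<Sum>U\<in>Pow ?X. ?I B U)" "F C = (\<Sum>U\<in>Pow ?X. ?I C U)"
    by (intro F_eq; blast)+
  ultimately show ?thesis
    by (simp only: sum.distrib)
qed

lemma det_rows_sum:
  fixes a :: "'m::finite \<Rightarrow> 'k \<Rightarrow> 'a::comm_ring_1^'m"
  assumes "finite S"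
  shows "det (\<chi> i. \<Sum>k\<in>S. a i k) = (\<Sum>f\<in>UNIV \<rightarrow>\<^sub>E S. det (\<chi> i. a i (f i)))"
proof -
  let ?P = "{p. p permutes (UNIV::'m set)}"
  have "det (\<chi> i. \<Sum>k\<in>S. a i k)
      = (\<Sum>p\<in>?P. of_int (sign p) * (\<Sum>f\<in>UNIV \<rightarrow>\<^sub>E S. \<Prod>i\<in>UNIV. a i (f i) $ p i))"
    unfolding det_def by (simp add: prod_sum_PiE assms)
  also have "\<dots> = (\<Sum>f\<in>UNIV \<rightarrow>\<^sub>E S. \<Sum>p\<in>?P. of_int (sign p) * (\<Prod>i\<in>UNIV. a i (f i) $ p i))"
    by (simp add: sum_distrib_left sum.swap[where A = ?P])
  also have "\<dots> = (\<Sum>f\<in>UNIV \<rightarrow>\<^sub>E S. det (\<chi> i. a i (f i)))"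
    unfolding det_def by simp
  finally show ?thesis .
qed

lemma det_rows_outer_prod:
  "det (\<chi> i. outer_prod (w (f i)) $ i)
    = (\<Prod>i\<in>UNIV. w (f i) $ i) * det (\<chi> i j. cnj (w (f i) $ j) :: complex^'m::finite^'m)"
proof -
  have "(\<chi> i. outer_prod (w (f i)) $ i) = (\<chi> i. (w (f i) $ i) *s (\<chi> j. cnj (w (f i) $ j)))"
    by (simp add: vec_eq_iff outer_prod_def)
  then show ?thesis
    by (simp add: det_rows_mul)
qed

lemma det_rows_outer_prod_not_inj:
  assumes "\<not> inj f"
  shows "det (\<chi> i. outer_prod (w (f i)) $ i :: complex^'m::finite^'m) = 0"
proof -
  obtain i j where "i \<noteq> j" "f i = f j"
    using assms unfolding inj_def by blast
  then have "det (\<chi> i j. cnj (w (f i) $ j) :: complex^'m^'m) = 0"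
    by (intro det_identical_rows[of i j]) (auto simp: row_def vec_eq_iff)
  then show ?thesis
    by (simp add: det_rows_outer_prod)
qed

definition outer_prod_det_part :: "('k \<Rightarrow> complex^'m) \<Rightarrow> 'k set \<Rightarrow> complex" where
  "outer_prod_det_part w U = (\<Sum>f | range f = U. det (\<chi> i. outer_prod (w (f i)) $ i))"

lemma det_sum_outer_prod:
  fixes w :: "'k \<Rightarrow> complex^'m::finite"
  assumes "finite S"
  shows "det (\<Sum>k\<in>S. outer_prod (w k)) = (\<Sum>U\<in>Pow S. outer_prod_det_part w U)"
proof -
  let ?t = "\<lambda>f. det (\<chi> i. outer_prod (w (f i)) $ i)"
  have "(\<Sum>k\<in>S. outer_prod (w k)) = (\<chi> i. \<Sum>k\<in>S. outer_prod (w k) $ i)"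
    by (simp add: vec_eq_iff)
  then have "det (\<Sum>k\<in>S. outer_prod (w k)) = (\<Sum>f\<in>UNIV \<rightarrow>\<^sub>E S. ?t f)"
    using det_rows_sum[OF assms, of "\<lambda>i k. outer_prod (w k) $ i"] by simp
  also have "\<dots> = (\<Sum>U\<in>Pow S. \<Sum>f\<in>{f \<in> UNIV \<rightarrow>\<^sub>E S. range f = U}. ?t f)"
    using assms by (intro sum.group[symmetric]) (auto simp: finite_PiE)
  also have "\<dots> = (\<Sum>U\<in>Pow S. outer_prod_det_part w U)"
    unfolding outer_prod_det_part_def
    by (intro sum.cong refl arg_cong[where f = "\<lambda>F. sum ?t F"]) auto
  finally show ?thesis .
qed

lemma mult_cnj_nonneg: "z * cnj z \<ge> (0::complex)"
  by (simp add: complex_mult_cnj less_eq_complex_def)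

lemma det_cnj_entries: "det (\<chi> i j. cnj (M $ i $ j)) = cnj (det (M::complex^'m::finite^'m))"
  unfolding det_def by (simp add: cnj_sum cnj_prod)

lemma outer_prod_det_part_bij:
  fixes w :: "'k \<Rightarrow> complex^'m::finite"
  assumes g: "bij_betw g (UNIV::'m set) U"
  defines "W \<equiv> (\<chi> i j. w (g i) $ j) :: complex^'m^'m"
  shows "outer_prod_det_part w U = det W * cnj (det W)"
proof -
  let ?P = "{p. p permutes (UNIV::'m set)}"
  let ?t = "\<lambda>f. det (\<chi> i. outer_prod (w (f i)) $ i)"
  have "outer_prod_det_part w U = (\<Sum>p\<in>?P. ?t (g \<circ> p))"
    unfolding outer_prod_det_part_def
  proof (rule sym, rule sum.reindex_bij_witness[where i = "\<lambda>f. inv_into UNIV g \<circ> f" and j = "\<lambda>p. g \<circ> p"])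
    fix p assume "p \<in> ?P"
    then have "range (g \<circ> p) = U"
      using g by (metis bij_betw_def image_comp mem_Collect_eq permutes_image)
    then show "g \<circ> p \<in> {f. range f = U}" by simp
    show "inv_into UNIV g \<circ> (g \<circ> p) = p"
      using g by (auto simp: bij_betw_def fun_eq_iff)
  next
    fix f :: "'m \<Rightarrow> 'k" assume "f \<in> {f. range f = U}"
    then have rf: "range f = U" by simp
    then show "g \<circ> (inv_into UNIV g \<circ> f) = f"
      using g by (auto simp: bij_betw_def fun_eq_iff f_inv_into_f)
    have "card (range f) = CARD('m)"
      using g rf by (simp add: bij_betw_same_card)
    then have "inj f"
      using inj_on_iff_eq_card[of "UNIV::'m set" f] by simp
    then have "bij_betw f UNIV U"
      using rf by (simp add: bij_betw_def)
    then have "bij (inv_into UNIV g \<circ> f)"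
      using g by (auto intro: bij_betw_trans bij_betw_inv_into)
    then show "inv_into UNIV g \<circ> f \<in> ?P"
      by (auto intro: bij_imp_permutes)
  qed simp
  also have "\<dots> = (\<Sum>p\<in>?P. of_int (sign p) * (\<Prod>i\<in>UNIV. transpose W $ i $ p i)
      * det (\<chi> i j. cnj (W $ i $ j)))"
  proof (rule sum.cong[OF refl])
    fix p assume "p \<in> ?P"
    then have "det (\<chi> i j. cnj (w (g (p i)) $ j)) = of_int (sign p) * det (\<chi> i j. cnj (W $ i $ j))"
      using det_permute_rows[of p "\<chi> i j. cnj (W $ i $ j)"] by (simp add: W_def)
    then show "?t (g \<circ> p) = of_int (sign p) * (\<Prod>i\<in>UNIV. transpose W $ i $ p i)
        * det (\<chi> i j. cnj (W $ i $ j))"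
      using det_rows_outer_prod[of w "g \<circ> p"] by (simp add: W_def transpose_def)
  qed
  also have "\<dots> = det (transpose W) * det (\<chi> i j. cnj (W $ i $ j))"
    unfolding det_def[of "transpose W"] by (simp add: sum_distrib_right)
  also have "\<dots> = det W * cnj (det W)"
    by (simp add: det_cnj_entries)
  finally show ?thesis .
qed

lemma outer_prod_det_part_nonneg:
  fixes w :: "'k \<Rightarrow> complex^'m::finite"
  shows "outer_prod_det_part w U \<ge> 0"
proof (cases "\<exists>g. bij_betw g (UNIV::'m set) U")
  case True
  then show ?thesis
    using outer_prod_det_part_bij mult_cnj_nonneg by metis
next
  case False
  then have "\<not> inj f" if "range f = U" for f :: "'m \<Rightarrow> 'k"
    using that by (auto simp: bij_betw_def)
  then show ?thesis
    by (simp add: outer_prod_det_part_def det_rows_outer_prod_not_inj)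
qed

lemma det_sum_outer_prod_disjoint_union3_ineq:
  fixes w :: "'k \<Rightarrow> complex^'m::finite"
  assumes "finite A" "finite B" "finite C" "A \<inter> B = {}" "A \<inter> C = {}" "B \<inter> C = {}"
  defines "M \<equiv> \<lambda>S. \<Sum>p\<in>S. outer_prod (w p)"
  shows "det (M (A \<union> B)) + det (M (A \<union> C)) + det (M (B \<union> C))
    \<le> det (M (A \<union> B \<union> C)) + det (M A) + det (M B) + det (M C)"
  using sum_Pow_disjoint_union3_ineq[OF assms(1-6) outer_prod_det_part_nonneg[of w]] assms(1-3)
  by (simp add: M_def det_sum_outer_prod)

theorem corollary3p2:
  fixes A1 A2 A3 :: "complex ^'m ^'m"
  assumes "psd_mat A1" and "psd_mat A2" and "psd_mat A3"
  shows "det (A1 + A2 + A3) + det A1 + det A2 + det A3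
           \<ge> det (A1 + A2) + det (A1 + A3) + det (A2 + A3)"
proof -
  obtain n1 :: nat and v1 where A1: "A1 = (\<Sum>k<n1. outer_prod (v1 k))"
    using psd_mat_sum_outer_prod[OF assms(1)] by blast
  obtain n2 :: nat and v2 where A2: "A2 = (\<Sum>k<n2. outer_prod (v2 k))"
    using psd_mat_sum_outer_prod[OF assms(2)] by blast
  obtain n3 :: nat and v3 where A3: "A3 = (\<Sum>k<n3. outer_prod (v3 k))"
    using psd_mat_sum_outer_prod[OF assms(3)] by blast
  define w :: "nat \<times> nat \<Rightarrow> complex^'m"
    where "w = (\<lambda>(j, k). if j = 0 then v1 k else if j = 1 then v2 k else v3 k)"
  define S1 S2 S3 :: "(nat \<times> nat) set"
    where "S1 = {0} \<times> {..<n1}" and "S2 = {1} \<times> {..<n2}" and "S3 = {2} \<times> {..<n3}"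
  let ?M = "\<lambda>S. \<Sum>p\<in>S. outer_prod (w p)"
  have sum_Times: "?M ({j} \<times> {..<n}) = (\<Sum>k<n. outer_prod (w (j, k)))" for j n
    using sum.cartesian_product[of "\<lambda>j k. outer_prod (w (j, k))" "{..<n}" "{j}"]
    by (simp add: split_def)
  have "A1 = ?M S1" "A2 = ?M S2" "A3 = ?M S3"
    unfolding S1_def S2_def S3_def sum_Times by (simp_all add: A1 A2 A3 w_def)
  moreover have "finite S1" "finite S2" "finite S3" "S1 \<inter> S2 = {}" "S1 \<inter> S3 = {}" "S2 \<inter> S3 = {}"
    by (auto simp: S1_def S2_def S3_def)
  ultimately show ?thesis
    using det_sum_outer_prod_disjoint_union3_ineq[of S1 S2 S3 w]
    by (simp add: sum.union_disjoint Int_Un_distrib2)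
qed

end
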